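(* Let $\mathcal{C}$ be a category, $A,B$ objects of $\mathcal{C}$, and $L\subseteq\mathcal{C}(A,B)$ a regular language of arrows. If $F:\mathcal{C}\to\mathcal{D}$ is a finitary ULF functor of categories, then the image $F(L)\subseteq\mathcal{D}(F(A),F(B))$ is a regular language of arrows in $\mathcal{D}$.
   Context: Composition is written diagrammatically. A functor $p:\mathcal{Q}\to\mathcal{C}$ is ULF if for every arrow $\alpha$ of $\mathcal{Q}$ and arrows $u,v$ of $\mathcal{C}$ with $p(\alpha)=uv$ there is a unique pair $\beta,\gamma$ with $\alpha=\beta\gamma$, $p(\beta)=u$, $p(\gamma)=v$; it is finitary if the fibers $p^{-1}(A)$ over objects and $p^{-1}(w)$ over arrows are all finite. A nondeterministic finite-state automaton over $\mathcal{C}$ is a tuple $M=(\mathcal{C},\mathcal{Q},p,q_0,q_f)$ with $p:\mathcal{Q}\to\mathcal{C}$ finitary ULF and $q_0,q_f$ objects of $\mathcal{Q}$; it recognizes $\{p(\alpha)\mid\alpha:q_0\to q_f\}\subseteq\mathcal{C}(p(q_0),p(q_f))$. A subset $L\subseteq\mathcal{C}(A,B)$ is a regular language of arrows if it is the language recognized by such an automaton with $p(q_0)=A$ and $p(q_f)=B$. *)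

theory Defs
  imports Main
begin

text \<open>Small categories given explicitly by a set of objects and a set of arrows.
  Composition is diagrammatic: Comp C f g is "f then g", defined when Cod f = Dom g.\<close>

record ('o, 'a) cat =
  Obj  :: "'o set"
  Arr  :: "'a set"
  Dom  :: "'a \<Rightarrow> 'o"
  Cod  :: "'a \<Rightarrow> 'o"
  Id   :: "'o \<Rightarrow> 'a"
  Comp :: "'a \<Rightarrow> 'a \<Rightarrow> 'a"

definition category :: "('o, 'a, 'm) cat_scheme \<Rightarrow> bool" where
  "category C \<longleftrightarrow>
     (\<forall>f\<in>Arr C. Dom C f \<in> Obj C \<and> Cod C f \<in> Obj C) \<and>
     (\<forall>X\<in>Obj C. Id C X \<in> Arr C \<and> Dom C (Id C X) = X \<and> Cod C (Id C X) = X) \<and>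
     (\<forall>f\<in>Arr C. \<forall>g\<in>Arr C. Cod C f = Dom C g \<longrightarrow>
        Comp C f g \<in> Arr C \<and> Dom C (Comp C f g) = Dom C f \<and> Cod C (Comp C f g) = Cod C g) \<and>
     (\<forall>f\<in>Arr C. Comp C (Id C (Dom C f)) f = f \<and> Comp C f (Id C (Cod C f)) = f) \<and>
     (\<forall>f\<in>Arr C. \<forall>g\<in>Arr C. \<forall>h\<in>Arr C. Cod C f = Dom C g \<longrightarrow> Cod C g = Dom C h \<longrightarrow>
        Comp C (Comp C f g) h = Comp C f (Comp C g h))"

definition hom :: "('o, 'a, 'm) cat_scheme \<Rightarrow> 'o \<Rightarrow> 'o \<Rightarrow> 'a set" where
  "hom C X Y = {f \<in> Arr C. Dom C f = X \<and> Cod C f = Y}"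

definition is_functor :: "('o, 'a, 'm) cat_scheme \<Rightarrow> ('p, 'b, 'n) cat_scheme \<Rightarrow>
    ('o \<Rightarrow> 'p) \<Rightarrow> ('a \<Rightarrow> 'b) \<Rightarrow> bool" where
  "is_functor C D Fo Fa \<longleftrightarrow> category C \<and> category D \<and>
     (\<forall>X\<in>Obj C. Fo X \<in> Obj D) \<and>
     (\<forall>f\<in>Arr C. Fa f \<in> Arr D \<and> Dom D (Fa f) = Fo (Dom C f) \<and> Cod D (Fa f) = Fo (Cod C f)) \<and>
     (\<forall>X\<in>Obj C. Fa (Id C X) = Id D (Fo X)) \<and>
     (\<forall>f\<in>Arr C. \<forall>g\<in>Arr C. Cod C f = Dom C g \<longrightarrow> Fa (Comp C f g) = Comp D (Fa f) (Fa g))"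

definition ULF :: "('o, 'a, 'm) cat_scheme \<Rightarrow> ('p, 'b, 'n) cat_scheme \<Rightarrow>
    ('o \<Rightarrow> 'p) \<Rightarrow> ('a \<Rightarrow> 'b) \<Rightarrow> bool" where
  "ULF Q C Po Pa \<longleftrightarrow> is_functor Q C Po Pa \<and>
     (\<forall>\<alpha>\<in>Arr Q. \<forall>u\<in>Arr C. \<forall>v\<in>Arr C. Cod C u = Dom C v \<longrightarrow> Pa \<alpha> = Comp C u v \<longrightarrow>
        (\<exists>!\<beta>\<gamma>. fst \<beta>\<gamma> \<in> Arr Q \<and> snd \<beta>\<gamma> \<in> Arr Q \<and> Cod Q (fst \<beta>\<gamma>) = Dom Q (snd \<beta>\<gamma>) \<and>
              \<alpha> = Comp Q (fst \<beta>\<gamma>) (snd \<beta>\<gamma>) \<and> Pa (fst \<beta>\<gamma>) = u \<and> Pa (snd \<beta>\<gamma>) = v))"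

definition finitary :: "('o, 'a, 'm) cat_scheme \<Rightarrow> ('p, 'b, 'n) cat_scheme \<Rightarrow>
    ('o \<Rightarrow> 'p) \<Rightarrow> ('a \<Rightarrow> 'b) \<Rightarrow> bool" where
  "finitary Q C Po Pa \<longleftrightarrow> is_functor Q C Po Pa \<and>
     (\<forall>X\<in>Obj C. finite {x \<in> Obj Q. Po x = X}) \<and>
     (\<forall>w\<in>Arr C. finite {\<alpha> \<in> Arr Q. Pa \<alpha> = w})"

definition nfa :: "('o, 'a, 'm) cat_scheme \<Rightarrow> ('qo, 'qa, 'n) cat_scheme \<Rightarrow>
    ('qo \<Rightarrow> 'o) \<Rightarrow> ('qa \<Rightarrow> 'a) \<Rightarrow> 'qo \<Rightarrow> 'qo \<Rightarrow> bool" where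
  "nfa C Q Po Pa q0 qf \<longleftrightarrow> ULF Q C Po Pa \<and> finitary Q C Po Pa \<and> q0 \<in> Obj Q \<and> qf \<in> Obj Q"

definition nfa_lang :: "('qo, 'qa, 'n) cat_scheme \<Rightarrow> ('qa \<Rightarrow> 'a) \<Rightarrow> 'qo \<Rightarrow> 'qo \<Rightarrow> 'a set" where
  "nfa_lang Q Pa q0 qf = Pa ` hom Q q0 qf"

text \<open>L \<subseteq> C(A,B) is regular if recognised by some automaton whose state category
  has object type 'qo and arrow type 'qa, with p(q0) = A and p(qf) = B.\<close>

definition regular_lang :: "'qo itself \<Rightarrow> 'qa itself \<Rightarrow> ('o, 'a, 'm) cat_scheme \<Rightarrow>
    'o \<Rightarrow> 'o \<Rightarrow> 'a set \<Rightarrow> bool" where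
  "regular_lang _ _ C A B L \<longleftrightarrow>
     (\<exists>(Q :: ('qo, 'qa) cat) Po Pa q0 qf.
        nfa C Q Po Pa q0 qf \<and> Po q0 = A \<and> Po qf = B \<and> L = nfa_lang Q Pa q0 qf)"

end

theory Submission
  imports Defs
begin

text \<open>An automaton p : Q \<rightarrow> C postcomposed with a finitary ULF functor F : C \<rightarrow> D is an
  automaton F \<circ> p over D, since both properties are stable under composition of functors; its
  accepted arrows are the F-images of those accepted by p.\<close>

lemma functor_comp:
  assumes "is_functor Q C Po Pa" and "is_functor C D Fo Fa"
  shows "is_functor Q D (Fo \<circ> Po) (Fa \<circ> Pa)"
  using assms unfolding is_functor_def by (auto simp: category_def)

lemma ULF_functor: "ULF Q C Po Pa \<Longrightarrow> is_functor Q C Po Pa"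
  by (simp add: ULF_def)

lemma ULF_liftE:
  assumes "ULF Q C Po Pa" and "\<alpha> \<in> Arr Q" and "u \<in> Arr C" and "v \<in> Arr C"
    and "Cod C u = Dom C v" and "Pa \<alpha> = Comp C u v"
  obtains \<beta> \<gamma> where "\<beta> \<in> Arr Q" "\<gamma> \<in> Arr Q" "Cod Q \<beta> = Dom Q \<gamma>"
    "\<alpha> = Comp Q \<beta> \<gamma>" "Pa \<beta> = u" "Pa \<gamma> = v"
proof -
  have "\<exists>!\<beta>\<gamma>. fst \<beta>\<gamma> \<in> Arr Q \<and> snd \<beta>\<gamma> \<in> Arr Q \<and> Cod Q (fst \<beta>\<gamma>) = Dom Q (snd \<beta>\<gamma>) \<and>
      \<alpha> = Comp Q (fst \<beta>\<gamma>) (snd \<beta>\<gamma>) \<and> Pa (fst \<beta>\<gamma>) = u \<and> Pa (snd \<beta>\<gamma>) = v"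
    using assms unfolding ULF_def by blast
  then show ?thesis
    using that by (elim ex1E) blast
qed

lemma ULF_factor_unique:
  assumes P: "ULF Q C Po Pa"
    and "\<beta> \<in> Arr Q" "\<gamma> \<in> Arr Q" "Cod Q \<beta> = Dom Q \<gamma>"
    and "\<beta>' \<in> Arr Q" "\<gamma>' \<in> Arr Q" "Cod Q \<beta>' = Dom Q \<gamma>'"
    and "Comp Q \<beta> \<gamma> = Comp Q \<beta>' \<gamma>'" and "Pa \<beta> = Pa \<beta>'" and "Pa \<gamma> = Pa \<gamma>'"
  shows "\<beta> = \<beta>' \<and> \<gamma> = \<gamma>'"
proof -
  have P_functor: "is_functor Q C Po Pa"
    using P by (rule ULF_functor)
  then have "Comp Q \<beta> \<gamma> \<in> Arr Q"
    using assms(2-4) unfolding is_functor_def category_def by blast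
  moreover have "Pa \<beta> \<in> Arr C" "Pa \<gamma> \<in> Arr C" "Cod C (Pa \<beta>) = Dom C (Pa \<gamma>)"
      "Pa (Comp Q \<beta> \<gamma>) = Comp C (Pa \<beta>) (Pa \<gamma>)"
    using P_functor assms(2-4) unfolding is_functor_def by auto
  ultimately have "\<exists>!\<beta>\<gamma>. fst \<beta>\<gamma> \<in> Arr Q \<and> snd \<beta>\<gamma> \<in> Arr Q \<and> Cod Q (fst \<beta>\<gamma>) = Dom Q (snd \<beta>\<gamma>) \<and>
      Comp Q \<beta> \<gamma> = Comp Q (fst \<beta>\<gamma>) (snd \<beta>\<gamma>) \<and> Pa (fst \<beta>\<gamma>) = Pa \<beta> \<and> Pa (snd \<beta>\<gamma>) = Pa \<gamma>"
    using P unfolding ULF_def by blast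
  then have "(\<beta>, \<gamma>) = (\<beta>', \<gamma>')"
    using assms(2-10) by (elim ex1E) (metis fst_conv snd_conv)
  then show ?thesis by simp
qed

lemma ULFI:
  assumes "is_functor Q C Po Pa"
    and exists: "\<And>\<alpha> u v. \<lbrakk>\<alpha> \<in> Arr Q; u \<in> Arr C; v \<in> Arr C; Cod C u = Dom C v; Pa \<alpha> = Comp C u v\<rbrakk>
      \<Longrightarrow> \<exists>\<beta> \<gamma>. \<beta> \<in> Arr Q \<and> \<gamma> \<in> Arr Q \<and> Cod Q \<beta> = Dom Q \<gamma> \<and> \<alpha> = Comp Q \<beta> \<gamma> \<and> Pa \<beta> = u \<and> Pa \<gamma> = v"
    and unique: "\<And>\<beta> \<gamma> \<beta>' \<gamma>'. \<lbrakk>\<beta> \<in> Arr Q; \<gamma> \<in> Arr Q; Cod Q \<beta> = Dom Q \<gamma>;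
      \<beta>' \<in> Arr Q; \<gamma>' \<in> Arr Q; Cod Q \<beta>' = Dom Q \<gamma>'; Comp Q \<beta> \<gamma> = Comp Q \<beta>' \<gamma>';
      Pa \<beta> = Pa \<beta>'; Pa \<gamma> = Pa \<gamma>'\<rbrakk> \<Longrightarrow> \<beta> = \<beta>' \<and> \<gamma> = \<gamma>'"
  shows "ULF Q C Po Pa"
  unfolding ULF_def
proof (intro conjI ballI impI)
  fix \<alpha> u v
  assume "\<alpha> \<in> Arr Q" "u \<in> Arr C" "v \<in> Arr C" "Cod C u = Dom C v" "Pa \<alpha> = Comp C u v"
  then obtain \<beta> \<gamma> where lift: "\<beta> \<in> Arr Q" "\<gamma> \<in> Arr Q" "Cod Q \<beta> = Dom Q \<gamma>"
      "\<alpha> = Comp Q \<beta> \<gamma>" "Pa \<beta> = u" "Pa \<gamma> = v"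
    using exists by blast
  show "\<exists>!\<beta>\<gamma>. fst \<beta>\<gamma> \<in> Arr Q \<and> snd \<beta>\<gamma> \<in> Arr Q \<and> Cod Q (fst \<beta>\<gamma>) = Dom Q (snd \<beta>\<gamma>) \<and>
      \<alpha> = Comp Q (fst \<beta>\<gamma>) (snd \<beta>\<gamma>) \<and> Pa (fst \<beta>\<gamma>) = u \<and> Pa (snd \<beta>\<gamma>) = v"
  proof (rule ex1I[of _ "(\<beta>, \<gamma>)"])
    fix \<beta>\<gamma>'
    assume lift': "fst \<beta>\<gamma>' \<in> Arr Q \<and> snd \<beta>\<gamma>' \<in> Arr Q \<and> Cod Q (fst \<beta>\<gamma>') = Dom Q (snd \<beta>\<gamma>') \<and>
      \<alpha> = Comp Q (fst \<beta>\<gamma>') (snd \<beta>\<gamma>') \<and> Pa (fst \<beta>\<gamma>') = u \<and> Pa (snd \<beta>\<gamma>') = v"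
    obtain \<beta>' \<gamma>' where "\<beta>\<gamma>' = (\<beta>', \<gamma>')"
      by (cases \<beta>\<gamma>')
    moreover have "\<beta>' = \<beta> \<and> \<gamma>' = \<gamma>"
      using lift' lift unfolding \<open>\<beta>\<gamma>' = (\<beta>', \<gamma>')\<close> fst_conv snd_conv
      by (intro unique) simp_all
    ultimately show "\<beta>\<gamma>' = (\<beta>, \<gamma>)"
      by simp
  qed (simp add: lift)
qed (rule assms(1))

lemma ULF_comp:
  assumes P: "ULF Q C Po Pa" and F: "ULF C D Fo Fa"
  shows "ULF Q D (Fo \<circ> Po) (Fa \<circ> Pa)"
proof (rule ULFI)
  show "is_functor Q D (Fo \<circ> Po) (Fa \<circ> Pa)"
    using functor_comp[OF ULF_functor[OF P] ULF_functor[OF F]] .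
next
  fix \<alpha> u v
  assume \<alpha>: "\<alpha> \<in> Arr Q" and uv: "u \<in> Arr D" "v \<in> Arr D" "Cod D u = Dom D v"
    and "(Fa \<circ> Pa) \<alpha> = Comp D u v"
  moreover have "Pa \<alpha> \<in> Arr C"
    using ULF_functor[OF P] \<alpha> by (simp add: is_functor_def)
  ultimately obtain u' v' where "u' \<in> Arr C" "v' \<in> Arr C" "Cod C u' = Dom C v'"
      "Pa \<alpha> = Comp C u' v'" and "Fa u' = u" "Fa v' = v"
    using ULF_liftE[OF F \<open>Pa \<alpha> \<in> Arr C\<close> uv] by auto
  moreover obtain \<beta> \<gamma> where "\<beta> \<in> Arr Q" "\<gamma> \<in> Arr Q" "Cod Q \<beta> = Dom Q \<gamma>"
      "\<alpha> = Comp Q \<beta> \<gamma>" "Pa \<beta> = u'" "Pa \<gamma> = v'"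
    using ULF_liftE[OF P \<alpha>] calculation by blast
  ultimately show "\<exists>\<beta> \<gamma>. \<beta> \<in> Arr Q \<and> \<gamma> \<in> Arr Q \<and> Cod Q \<beta> = Dom Q \<gamma> \<and> \<alpha> = Comp Q \<beta> \<gamma> \<and>
      (Fa \<circ> Pa) \<beta> = u \<and> (Fa \<circ> Pa) \<gamma> = v"
    by auto
next
  fix \<beta> \<gamma> \<beta>' \<gamma>'
  assume factors: "\<beta> \<in> Arr Q" "\<gamma> \<in> Arr Q" "Cod Q \<beta> = Dom Q \<gamma>"
    "\<beta>' \<in> Arr Q" "\<gamma>' \<in> Arr Q" "Cod Q \<beta>' = Dom Q \<gamma>'" "Comp Q \<beta> \<gamma> = Comp Q \<beta>' \<gamma>'"
    and "(Fa \<circ> Pa) \<beta> = (Fa \<circ> Pa) \<beta>'" "(Fa \<circ> Pa) \<gamma> = (Fa \<circ> Pa) \<gamma>'"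
  moreover have "Pa \<beta> \<in> Arr C" "Pa \<gamma> \<in> Arr C" "Cod C (Pa \<beta>) = Dom C (Pa \<gamma>)"
      "Pa \<beta>' \<in> Arr C" "Pa \<gamma>' \<in> Arr C" "Cod C (Pa \<beta>') = Dom C (Pa \<gamma>')"
      "Comp C (Pa \<beta>) (Pa \<gamma>) = Comp C (Pa \<beta>') (Pa \<gamma>')"
    using ULF_functor[OF P] factors unfolding is_functor_def by metis+
  ultimately have "Pa \<beta> = Pa \<beta>' \<and> Pa \<gamma> = Pa \<gamma>'"
    using ULF_factor_unique[OF F] by simp
  then show "\<beta> = \<beta>' \<and> \<gamma> = \<gamma>'"
    using ULF_factor_unique[OF P] factors by blast
qed

lemma finite_fiber_comp:
  assumes "f ` S \<subseteq> T" and "finite {y \<in> T. g y = z}" and "\<And>y. y \<in> T \<Longrightarrow> finite {x \<in> S. f x = y}"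
  shows "finite {x \<in> S. g (f x) = z}"
proof (rule finite_subset)
  show "{x \<in> S. g (f x) = z} \<subseteq> (\<Union>y\<in>{y \<in> T. g y = z}. {x \<in> S. f x = y})"
    using assms(1) by auto
  show "finite (\<Union>y\<in>{y \<in> T. g y = z}. {x \<in> S. f x = y})"
    using assms(2,3) by blast
qed

lemma finitary_comp:
  assumes P: "finitary Q C Po Pa" and F: "finitary C D Fo Fa"
  shows "finitary Q D (Fo \<circ> Po) (Fa \<circ> Pa)"
proof -
  have P_functor: "is_functor Q C Po Pa" and F_functor: "is_functor C D Fo Fa"
    using P F by (simp_all add: finitary_def)
  then have Obj_into: "Po ` Obj Q \<subseteq> Obj C" and Arr_into: "Pa ` Arr Q \<subseteq> Arr C"
    unfolding is_functor_def by auto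
  have "finite {x \<in> Obj Q. Fo (Po x) = X}" if "X \<in> Obj D" for X
  proof (rule finite_fiber_comp[OF Obj_into])
    show "finite {y \<in> Obj C. Fo y = X}"
      using F that by (simp add: finitary_def)
    show "finite {x \<in> Obj Q. Po x = y}" if "y \<in> Obj C" for y
      using P that by (simp add: finitary_def)
  qed
  moreover have "finite {\<alpha> \<in> Arr Q. Fa (Pa \<alpha>) = w}" if "w \<in> Arr D" for w
  proof (rule finite_fiber_comp[OF Arr_into])
    show "finite {y \<in> Arr C. Fa y = w}"
      using F that by (simp add: finitary_def)
    show "finite {\<alpha> \<in> Arr Q. Pa \<alpha> = y}" if "y \<in> Arr C" for y
      using P that by (simp add: finitary_def)
  qed
  ultimately show ?thesis
    using functor_comp[OF P_functor F_functor] unfolding finitary_def by simp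
qed

lemma nfa_comp:
  assumes "nfa C Q Po Pa q0 qf" and "ULF C D Fo Fa" and "finitary C D Fo Fa"
  shows "nfa D Q (Fo \<circ> Po) (Fa \<circ> Pa) q0 qf"
  using assms ULF_comp finitary_comp unfolding nfa_def by blast

lemma nfa_lang_comp: "nfa_lang Q (Fa \<circ> Pa) q0 qf = Fa ` nfa_lang Q Pa q0 qf"
  unfolding nfa_lang_def by (simp add: image_comp)

theorem mainTheorem10:
  fixes C :: "('o, 'a) cat" and D :: "('p, 'b) cat"
    and A B :: 'o and L :: "'a set"
    and Fo :: "'o \<Rightarrow> 'p" and Fa :: "'a \<Rightarrow> 'b"
  assumes "category C" and "category D"
    and "A \<in> Obj C" and "B \<in> Obj C"
    and "regular_lang TYPE('qo) TYPE('qa) C A B L"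
    and "is_functor C D Fo Fa" and "ULF C D Fo Fa" and "finitary C D Fo Fa"
  shows "regular_lang TYPE('qo) TYPE('qa) D (Fo A) (Fo B) (Fa ` L)"
proof -
  from assms(5) obtain Q :: "('qo, 'qa) cat" and Po Pa q0 qf
    where M: "nfa C Q Po Pa q0 qf" and "Po q0 = A" "Po qf = B" and "L = nfa_lang Q Pa q0 qf"
    unfolding regular_lang_def by blast
  then have "nfa D Q (Fo \<circ> Po) (Fa \<circ> Pa) q0 qf"
    and "(Fo \<circ> Po) q0 = Fo A" "(Fo \<circ> Po) qf = Fo B"
    and "Fa ` L = nfa_lang Q (Fa \<circ> Pa) q0 qf"
    using nfa_comp[OF M assms(7,8)] by (simp_all add: nfa_lang_comp)
  then show ?thesis
    unfolding regular_lang_def by blast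
qed

end
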